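(* Let $X, Y$ be finite input sets and $\mathcal{A}, \mathcal{B}$ finite output sets. Let $G$ be a bipartite Bell expression $G(Q) = \sum_{a\in\mathcal{A},b\in\mathcal{B},x\in X,y\in Y} \alpha_{a,b,x,y}\, Q(a,b|x,y)$ with coefficients $\alpha_{a,b,x,y}\ge 0$, normalized so that its classical (local) value satisfies $\omega_c(G)\le 1$. Let $\omega_{ns}(G)$ denote the maximum of $G(Q)$ over all bipartite no-signaling boxes $Q$. Then there exists a tripartite relativistic causal box $\{P(a,b,c|x,y,z)\}$ with $a,c\in\mathcal{A}$, $b\in\mathcal{B}$, $x,z\in X$, $y\in Y$ such that $$\sum_{a,b,x,y}\alpha_{a,b,x,y}\,P_{AB}(a,b|x,y)=\omega_{ns}(G)\quad\text{and}\quad \sum_{c,b,z,y}\alpha_{c,b,z,y}\,P_{CB}(c,b|z,y)=\omega_{ns}(G),$$ where $P_{AB}(a,b|x,y)=\sum_c P(a,b,c|x,y,z)$ and $P_{CB}(c,b|z,y)=\sum_a P(a,b,c|x,y,z)$ (both well defined by the relativistic causal constraints). That is, both pairs Alice–Bob and Bob–Charlie (with Charlie playing Alice's role) simultaneously attain the maximal no-signaling value of $G$.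
   Context: A bipartite box $\{Q(a,b|x,y)\}$ is a family of probability distributions over $(a,b)$ indexed by $(x,y)$; it is no-signaling if $\sum_b Q(a,b|x,y)$ is independent of $y$ and $\sum_a Q(a,b|x,y)$ is independent of $x$. The classical value $\omega_c(G)$ is the maximum of $G$ over local (convex mixtures of deterministic product) boxes. A tripartite box $\{P(a,b,c|x,y,z)\}$ (nonnegative, with $\sum_{a,b,c}P(a,b,c|x,y,z)=1$ for all $x,y,z$) is called relativistic causal (for the measurement configuration in which Bob's input may influence the correlations between Alice and Charlie) if it satisfies: (i) $\sum_a P(a,b,c|x,y,z)$ is independent of $x$ for all $y,z,b,c$; (ii) $\sum_c P(a,b,c|x,y,z)$ is independent of $z$ for all $x,y,a,b$; (iii) $\sum_{b,c} P(a,b,c|x,y,z)$ is independent of $(y,z)$ for all $x,a$; (iv) $\sum_{a,b} P(a,b,c|x,y,z)$ is independent of $(x,y)$ for all $z,c$. (Unlike full no-signaling, $\sum_b P(a,b,c|x,y,z)$ is not required to be independent of $y$.) *)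

theory Defs
  imports Complex_Main
begin

definition box2 :: "('a::finite \<Rightarrow> 'b::finite \<Rightarrow> 'x::finite \<Rightarrow> 'y::finite \<Rightarrow> real) \<Rightarrow> bool" where
  "box2 Q \<longleftrightarrow> (\<forall>a b x y. Q a b x y \<ge> 0) \<and> (\<forall>x y. (\<Sum>a\<in>UNIV. \<Sum>b\<in>UNIV. Q a b x y) = 1)"

definition no_signaling2 :: "('a::finite \<Rightarrow> 'b::finite \<Rightarrow> 'x::finite \<Rightarrow> 'y::finite \<Rightarrow> real) \<Rightarrow> bool" where
  "no_signaling2 Q \<longleftrightarrow> box2 Q \<and>
     (\<forall>a x y y'. (\<Sum>b\<in>UNIV. Q a b x y) = (\<Sum>b\<in>UNIV. Q a b x y')) \<and>
     (\<forall>b x x' y. (\<Sum>a\<in>UNIV. Q a b x y) = (\<Sum>a\<in>UNIV. Q a b x' y))"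

text \<open>Local boxes: convex mixtures of deterministic product boxes, indexed by pairs of
  deterministic strategies (f,g) with f : X \<rightarrow> A, g : Y \<rightarrow> B.\<close>

definition local_box2 :: "('a::finite \<Rightarrow> 'b::finite \<Rightarrow> 'x::finite \<Rightarrow> 'y::finite \<Rightarrow> real) \<Rightarrow> bool" where
  "local_box2 Q \<longleftrightarrow> (\<exists>w :: ('x \<Rightarrow> 'a) \<Rightarrow> ('y \<Rightarrow> 'b) \<Rightarrow> real.
      (\<forall>f g. w f g \<ge> 0) \<and> (\<Sum>f\<in>UNIV. \<Sum>g\<in>UNIV. w f g) = 1 \<and>
      (\<forall>a b x y. Q a b x y =
         (\<Sum>f\<in>UNIV. \<Sum>g\<in>UNIV. w f g * (if f x = a \<and> g y = b then 1 else 0))))"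

definition bell_value :: "('a::finite \<Rightarrow> 'b::finite \<Rightarrow> 'x::finite \<Rightarrow> 'y::finite \<Rightarrow> real)
     \<Rightarrow> ('a \<Rightarrow> 'b \<Rightarrow> 'x \<Rightarrow> 'y \<Rightarrow> real) \<Rightarrow> real" where
  "bell_value \<alpha> Q = (\<Sum>a\<in>UNIV. \<Sum>b\<in>UNIV. \<Sum>x\<in>UNIV. \<Sum>y\<in>UNIV. \<alpha> a b x y * Q a b x y)"

definition omega_c :: "('a::finite \<Rightarrow> 'b::finite \<Rightarrow> 'x::finite \<Rightarrow> 'y::finite \<Rightarrow> real) \<Rightarrow> real" where
  "omega_c \<alpha> = Sup {bell_value \<alpha> Q | Q. local_box2 Q}"

definition omega_ns :: "('a::finite \<Rightarrow> 'b::finite \<Rightarrow> 'x::finite \<Rightarrow> 'y::finite \<Rightarrow> real) \<Rightarrow> real" where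
  "omega_ns \<alpha> = Sup {bell_value \<alpha> Q | Q. no_signaling2 Q}"

definition box3 :: "('a::finite \<Rightarrow> 'b::finite \<Rightarrow> 'c::finite \<Rightarrow> 'x \<Rightarrow> 'y \<Rightarrow> 'z \<Rightarrow> real) \<Rightarrow> bool" where
  "box3 P \<longleftrightarrow> (\<forall>a b c x y z. P a b c x y z \<ge> 0) \<and>
     (\<forall>x y z. (\<Sum>a\<in>UNIV. \<Sum>b\<in>UNIV. \<Sum>c\<in>UNIV. P a b c x y z) = 1)"

definition rel_causal :: "('a::finite \<Rightarrow> 'b::finite \<Rightarrow> 'c::finite \<Rightarrow> 'x \<Rightarrow> 'y \<Rightarrow> 'z \<Rightarrow> real) \<Rightarrow> bool" where
  "rel_causal P \<longleftrightarrow> box3 P \<and>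
     (\<forall>b c x x' y z. (\<Sum>a\<in>UNIV. P a b c x y z) = (\<Sum>a\<in>UNIV. P a b c x' y z)) \<and>
     (\<forall>a b x y z z'. (\<Sum>c\<in>UNIV. P a b c x y z) = (\<Sum>c\<in>UNIV. P a b c x y z')) \<and>
     (\<forall>a x y y' z z'. (\<Sum>b\<in>UNIV. \<Sum>c\<in>UNIV. P a b c x y z) = (\<Sum>b\<in>UNIV. \<Sum>c\<in>UNIV. P a b c x y' z')) \<and>
     (\<forall>c x x' y y' z. (\<Sum>a\<in>UNIV. \<Sum>b\<in>UNIV. P a b c x y z) = (\<Sum>a\<in>UNIV. \<Sum>b\<in>UNIV. P a b c x' y' z))"

end

theory Submission imports Defs "HOL-Analysis.Analysis" begin

text \<open>Take a no-signaling box Q attaining omega_ns (it exists since the no-signaling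
  boxes form a nonempty compact polytope) and let Alice and Charlie each share a copy of Q
  with Bob, conditionally independent given Bob's input and output:
  P(a,b,c|x,y,z) = Q(a,b|x,y) Q(c,b|z,y) / Q(b|y). Because Q does not signal from Alice to
  Bob, Bob's marginal Q(b|y) is well defined, and both two-party marginals of P are Q.\<close>

lemma box2_le_one:
  assumes "box2 Q"
  shows "Q a b x y \<le> 1"
proof -
  have nn: "\<And>a b. 0 \<le> Q a b x y" and tot: "(\<Sum>a\<in>UNIV. \<Sum>b\<in>UNIV. Q a b x y) = 1"
    using assms unfolding box2_def by auto
  have "Q a b x y \<le> (\<Sum>b'\<in>UNIV. Q a b' x y)"
    by (rule member_le_sum) (auto simp: nn)
  also have "\<dots> \<le> (\<Sum>a'\<in>UNIV. \<Sum>b'\<in>UNIV. Q a' b' x y)"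
    by (rule member_le_sum[where f = "\<lambda>a'. \<Sum>b'\<in>UNIV. Q a' b' x y"]) (auto intro: sum_nonneg nn)
  finally show ?thesis using tot by simp
qed

definition box_of_vec :: "real^('a::finite \<times> 'b::finite \<times> 'x::finite \<times> 'y::finite)
    \<Rightarrow> 'a \<Rightarrow> 'b \<Rightarrow> 'x \<Rightarrow> 'y \<Rightarrow> real" where
  "box_of_vec v a b x y = v $ (a, b, x, y)"

lemma box_of_vec_vec_lambda: "box_of_vec (\<chi> i. case i of (a, b, x, y) \<Rightarrow> Q a b x y) = Q"
  by (simp add: box_of_vec_def fun_eq_iff)

lemma compact_no_signaling2_vecs: "compact {v. no_signaling2 (box_of_vec v)}"
unfolding compact_eq_bounded_closed
proof
  have "{v. no_signaling2 (box_of_vec v)} \<subseteq> cbox 0 1"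
  proof
    fix v assume "v \<in> {v. no_signaling2 (box_of_vec v)}"
    then have box: "box2 (box_of_vec v)" by (simp add: no_signaling2_def)
    have "0 \<le> v $ (a, b, x, y) \<and> v $ (a, b, x, y) \<le> 1" for a b x y
      using box box2_le_one[OF box, of a b x y] by (simp add: box2_def box_of_vec_def)
    then show "v \<in> cbox 0 1"
      unfolding mem_box_cart by (metis prod_cases4 vec_component zero_index one_index)
  qed
  then show "bounded {v. no_signaling2 (box_of_vec v)}"
    using bounded_cbox bounded_subset by blast
  have ns_vecs: "{v. no_signaling2 (box_of_vec v)} =
      {v. \<forall>i. 0 \<le> v $ i}
    \<inter> {v. \<forall>x y. (\<Sum>a\<in>UNIV. \<Sum>b\<in>UNIV. v $ (a, b, x, y)) = 1}
    \<inter> {v. \<forall>a x y y'. (\<Sum>b\<in>UNIV. v $ (a, b, x, y)) = (\<Sum>b\<in>UNIV. v $ (a, b, x, y'))}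
    \<inter> {v. \<forall>b x x' y. (\<Sum>a\<in>UNIV. v $ (a, b, x, y)) = (\<Sum>a\<in>UNIV. v $ (a, b, x', y))}"
    unfolding no_signaling2_def box2_def box_of_vec_def by auto
  show "closed {v. no_signaling2 (box_of_vec v)}"
    unfolding ns_vecs by (intro closed_Int closed_Collect_all closed_Collect_le closed_Collect_eq continuous_intros)
qed

lemma omega_ns_attained:
  fixes \<alpha> :: "'a::finite \<Rightarrow> 'b::finite \<Rightarrow> 'x::finite \<Rightarrow> 'y::finite \<Rightarrow> real"
  obtains Q where "no_signaling2 Q" and "bell_value \<alpha> Q = omega_ns \<alpha>"
proof -
  let ?S = "{v. no_signaling2 (box_of_vec v :: 'a \<Rightarrow> 'b \<Rightarrow> 'x \<Rightarrow> 'y \<Rightarrow> real)}"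
  have "(\<chi> i. 1 / (real CARD('a) * real CARD('b))) \<in> ?S"
    unfolding no_signaling2_def box2_def box_of_vec_def by simp
  then have "?S \<noteq> {}" by blast
  moreover have "continuous_on ?S (\<lambda>v. bell_value \<alpha> (box_of_vec v))"
    unfolding bell_value_def box_of_vec_def by (intro continuous_intros)
  ultimately obtain v where v: "v \<in> ?S"
    and v_max: "\<And>w. w \<in> ?S \<Longrightarrow> bell_value \<alpha> (box_of_vec w) \<le> bell_value \<alpha> (box_of_vec v)"
    using continuous_attains_sup[OF compact_no_signaling2_vecs] by blast
  have "omega_ns \<alpha> = bell_value \<alpha> (box_of_vec v)"
    unfolding omega_ns_def
  proof (rule cSup_eq_maximum)
    show "bell_value \<alpha> (box_of_vec v) \<in> {bell_value \<alpha> Q |Q. no_signaling2 Q}"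
      using v by blast
  next
    fix t assume "t \<in> {bell_value \<alpha> Q |Q. no_signaling2 Q}"
    then obtain Q where "t = bell_value \<alpha> Q" and "no_signaling2 Q" by blast
    then show "t \<le> bell_value \<alpha> (box_of_vec v)"
      using v_max[of "\<chi> i. case i of (a, b, x, y) \<Rightarrow> Q a b x y"] by (simp add: box_of_vec_vec_lambda)
  qed
  with v show thesis by (intro that) simp_all
qed

definition glue_boxes ::
    "('a::finite \<Rightarrow> 'b::finite \<Rightarrow> 'x \<Rightarrow> 'y \<Rightarrow> real) \<Rightarrow> ('c::finite \<Rightarrow> 'b \<Rightarrow> 'z \<Rightarrow> 'y \<Rightarrow> real)
     \<Rightarrow> 'a \<Rightarrow> 'b \<Rightarrow> 'c \<Rightarrow> 'x \<Rightarrow> 'y \<Rightarrow> 'z \<Rightarrow> real" where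
  "glue_boxes Q R a b c x y z =
     (let m = \<Sum>a'\<in>UNIV. Q a' b x y in if m = 0 then 0 else Q a b x y * R c b z y / m)"

locale common_bob_marginal =
  fixes Q :: "'a::finite \<Rightarrow> 'b::finite \<Rightarrow> 'x::finite \<Rightarrow> 'y::finite \<Rightarrow> real"
    and R :: "'c::finite \<Rightarrow> 'b \<Rightarrow> 'z::finite \<Rightarrow> 'y \<Rightarrow> real"
  assumes ns_Q: "no_signaling2 Q" and ns_R: "no_signaling2 R"
    and same_bob: "\<And>b x y z. (\<Sum>a\<in>UNIV. Q a b x y) = (\<Sum>c\<in>UNIV. R c b z y)"
begin

lemma Q_nonneg: "0 \<le> Q a b x y" and R_nonneg: "0 \<le> R c b z y"
  using ns_Q ns_R unfolding no_signaling2_def box2_def by auto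

lemma Q_zero_if_bob_zero: "(\<Sum>a'\<in>UNIV. Q a' b x y) = 0 \<Longrightarrow> Q a b x y = 0"
  using Q_nonneg sum_nonneg_eq_0_iff[of UNIV "\<lambda>a'. Q a' b x y"] by auto

lemma R_zero_if_bob_zero: "(\<Sum>a'\<in>UNIV. Q a' b x y) = 0 \<Longrightarrow> R c b z y = 0"
  using R_nonneg sum_nonneg_eq_0_iff[of UNIV "\<lambda>c'. R c' b z y"]
  by (simp add: same_bob[of b x y z])

lemma glue_sum_charlie: "(\<Sum>c\<in>UNIV. glue_boxes Q R a b c x y z) = Q a b x y"
proof (cases "(\<Sum>a'\<in>UNIV. Q a' b x y) = 0")
  case True
  then show ?thesis by (simp add: glue_boxes_def Q_zero_if_bob_zero)
next
  case False
  then have "(\<Sum>c\<in>UNIV. glue_boxes Q R a b c x y z)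
      = Q a b x y * (\<Sum>c\<in>UNIV. R c b z y) / (\<Sum>a'\<in>UNIV. Q a' b x y)"
    by (simp add: glue_boxes_def sum_distrib_left sum_divide_distrib)
  then show ?thesis using False same_bob[of b x y z] by simp
qed

lemma glue_sum_alice: "(\<Sum>a\<in>UNIV. glue_boxes Q R a b c x y z) = R c b z y"
proof (cases "(\<Sum>a'\<in>UNIV. Q a' b x y) = 0")
  case True
  then show ?thesis by (simp add: glue_boxes_def R_zero_if_bob_zero)
next
  case False
  then have "(\<Sum>a\<in>UNIV. glue_boxes Q R a b c x y z)
      = (\<Sum>a\<in>UNIV. Q a b x y) * R c b z y / (\<Sum>a'\<in>UNIV. Q a' b x y)"
    by (simp add: glue_boxes_def sum_distrib_right sum_divide_distrib)
  then show ?thesis using False by simp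
qed

lemma rel_causal_glue: "rel_causal (glue_boxes Q R)"
proof -
  have Q_box: "box2 Q" and R_box: "box2 R"
    and Q_ns: "\<And>a x y y'. (\<Sum>b\<in>UNIV. Q a b x y) = (\<Sum>b\<in>UNIV. Q a b x y')"
    and R_ns: "\<And>c z y y'. (\<Sum>b\<in>UNIV. R c b z y) = (\<Sum>b\<in>UNIV. R c b z y')"
    using ns_Q ns_R unfolding no_signaling2_def by blast+
  have sum_alice_bob: "(\<Sum>a\<in>UNIV. \<Sum>b\<in>UNIV. glue_boxes Q R a b c x y z) = (\<Sum>b\<in>UNIV. R c b z y)"
    for c x y z
    by (subst sum.swap) (simp add: glue_sum_alice)
  have "0 \<le> glue_boxes Q R a b c x y z" for a b c x y z
    using Q_nonneg R_nonneg sum_nonneg[of UNIV "\<lambda>a'. Q a' b x y"]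
    by (simp add: glue_boxes_def Let_def)
  moreover have "(\<Sum>a\<in>UNIV. \<Sum>b\<in>UNIV. \<Sum>c\<in>UNIV. glue_boxes Q R a b c x y z) = 1" for x y z
    using Q_box by (simp add: glue_sum_charlie box2_def)
  ultimately show ?thesis
    unfolding rel_causal_def box3_def glue_sum_alice glue_sum_charlie sum_alice_bob
    by (blast intro: Q_ns R_ns)
qed

end

theorem proposition1:
  fixes \<alpha> :: "'a::finite \<Rightarrow> 'b::finite \<Rightarrow> 'x::finite \<Rightarrow> 'y::finite \<Rightarrow> real"
  assumes nonneg: "\<forall>a b x y. \<alpha> a b x y \<ge> 0"
    and classical: "omega_c \<alpha> \<le> 1"
  shows "\<exists>P :: 'a \<Rightarrow> 'b \<Rightarrow> 'a \<Rightarrow> 'x \<Rightarrow> 'y \<Rightarrow> 'x \<Rightarrow> real.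
           rel_causal P \<and>
           (\<forall>z. (\<Sum>a\<in>UNIV. \<Sum>b\<in>UNIV. \<Sum>x\<in>UNIV. \<Sum>y\<in>UNIV.
                    \<alpha> a b x y * (\<Sum>c\<in>UNIV. P a b c x y z)) = omega_ns \<alpha>) \<and>
           (\<forall>x. (\<Sum>c\<in>UNIV. \<Sum>b\<in>UNIV. \<Sum>z\<in>UNIV. \<Sum>y\<in>UNIV.
                    \<alpha> c b z y * (\<Sum>a\<in>UNIV. P a b c x y z)) = omega_ns \<alpha>)"
proof -
  obtain Q where ns: "no_signaling2 Q" and opt: "bell_value \<alpha> Q = omega_ns \<alpha>"
    using omega_ns_attained by blast
  interpret common_bob_marginal Q Q
    using ns by unfold_locales (auto simp: no_signaling2_def)
  show ?thesis
    using rel_causal_glue opt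
    by (intro exI[of _ "glue_boxes Q Q"]) (simp add: glue_sum_alice glue_sum_charlie bell_value_def)
qed

end
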